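(* Let $d\ge 1$ be an integer and for $s\ge 1$ let $N_d(s)$ denote the number of $(s,s+1)$-core partitions with $d$-distinct parts. Then $N_d(s)=s$ for $1\le s\le d+1$, and for all $s\ge d+2$, $$N_d(s)=N_d(s-1)+N_d(s-(d+1)).$$
   Context: A partition $\lambda=(\lambda_1,\ldots,\lambda_l)$ is a finite nonincreasing sequence of positive integers (the empty partition is allowed and counted). $\lambda$ is a partition with $d$-distinct parts if $\lambda_i-\lambda_{i+1}\ge d$ for all $1\le i\le l-1$. In the Young diagram of $\lambda$, the hook length of box $(i,j)$ is the number of boxes directly to its right, plus the number directly below it, plus one. $\lambda$ is an $(s,s+1)$-core partition if no box has hook length $s$ or $s+1$. *)

theory Defs
  imports Main
begin

text \<open>A partition is a finite nonincreasing list of positive integers (the empty list is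
the empty partition). Rows and columns of the Young diagram are indexed from 0.\<close>

definition is_partition :: "nat list \<Rightarrow> bool" where
  "is_partition lam \<longleftrightarrow> sorted_wrt (\<ge>) lam \<and> (\<forall>x\<in>set lam. 0 < x)"

definition d_distinct :: "nat \<Rightarrow> nat list \<Rightarrow> bool" where
  "d_distinct d lam \<longleftrightarrow> (\<forall>i. i + 1 < length lam \<longrightarrow> lam ! (i + 1) + d \<le> lam ! i)"

definition in_diagram :: "nat list \<Rightarrow> nat \<Rightarrow> nat \<Rightarrow> bool" where
  "in_diagram lam i j \<longleftrightarrow> i < length lam \<and> j < lam ! i"

text \<open>Hook length of box (i,j): boxes to the right (arm) + boxes below (leg) + 1.\<close>
definition hook :: "nat list \<Rightarrow> nat \<Rightarrow> nat \<Rightarrow> nat" where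
  "hook lam i j = (lam ! i - (j + 1)) + card {k. i < k \<and> k < length lam \<and> j < lam ! k} + 1"

definition no_hook :: "nat list \<Rightarrow> nat \<Rightarrow> bool" where
  "no_hook lam t \<longleftrightarrow> (\<forall>i j. in_diagram lam i j \<longrightarrow> hook lam i j \<noteq> t)"

definition is_core_pair :: "nat \<Rightarrow> nat list \<Rightarrow> bool" where
  "is_core_pair s lam \<longleftrightarrow> no_hook lam s \<and> no_hook lam (s + 1)"

definition N :: "nat \<Rightarrow> nat \<Rightarrow> nat" where
  "N d s = card {lam. is_partition lam \<and> d_distinct d lam \<and> is_core_pair s lam}"

end

theory Submission
  imports Defs
begin

text \<open>For \<open>d \<ge> 1\<close> the parts are distinct, and then consecutive hooks along the first row
differ by at most 2 and run from the largest hook \<open>\<lambda>\<^sub>1 + \<ell>(\<lambda>) - 1\<close> down to 1. Hence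
\<open>\<lambda>\<close> is an \<open>(s, s+1)\<close>-core iff \<open>\<lambda>\<^sub>1 + \<ell>(\<lambda>) \<le> s\<close>. Splitting these partitions by whether
equality holds, and removing the first part in the equality case, gives the recurrence.\<close>

definition d_partition :: "nat \<Rightarrow> nat list \<Rightarrow> bool" where
  "d_partition d lam \<longleftrightarrow> is_partition lam \<and> d_distinct d lam"

definition small_d_partitions :: "nat \<Rightarrow> nat \<Rightarrow> nat list set" where
  "small_d_partitions d s = {lam. d_partition d lam \<and> (lam \<noteq> [] \<longrightarrow> hd lam + length lam \<le> s)}"

lemma sorted_wrt_greater_if_d_distinct:
  assumes "0 < d" "d_distinct d lam"
  shows "sorted_wrt (>) lam"
  using assms by (fastforce simp: sorted_wrt_iff_nth_Suc_transp d_distinct_def)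

lemma d_distinct_Cons:
  "d_distinct d (a # mu) \<longleftrightarrow> d_distinct d mu \<and> (mu \<noteq> [] \<longrightarrow> hd mu + d \<le> a)"
proof -
  have "d_distinct d (a # mu) \<longleftrightarrow>
      (\<forall>i. i + 1 < length (a # mu) \<longrightarrow> (a # mu) ! (i + 1) + d \<le> (a # mu) ! i)"
    by (simp add: d_distinct_def)
  also have "\<dots> \<longleftrightarrow> (mu \<noteq> [] \<longrightarrow> hd mu + d \<le> a) \<and> d_distinct d mu"
    by (auto simp: d_distinct_def hd_conv_nth nth_Cons split: nat.split)
  finally show ?thesis by blast
qed

lemma d_partition_Cons:
  "d_partition d (a # mu) \<longleftrightarrow> d_partition d mu \<and> 0 < a \<and> (mu \<noteq> [] \<longrightarrow> hd mu + d \<le> a)"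
proof -
  have "y \<le> a" if "is_partition mu" "y \<in> set mu" "hd mu + d \<le> a" for y
    using that by (cases mu) (auto simp: is_partition_def)
  then show ?thesis
    by (fastforce simp: d_partition_def d_distinct_Cons is_partition_def)
qed

lemma descent_by_at_most_two_hits:
  fixes f :: "nat \<Rightarrow> nat"
  assumes "\<And>j. j < m \<Longrightarrow> f j \<le> f (Suc j) + 2" "s \<le> f 0" "f m \<le> s"
  shows "\<exists>j\<le>m. f j = s \<or> f j = Suc s"
  using assms
proof (induction m)
  case (Suc m)
  show ?case
  proof (cases "f m \<le> s")
    case True
    then show ?thesis using Suc by (metis le_SucI less_SucI)
  next
    case False
    show ?thesis
    proof (cases "f (Suc m) = s")
      case True
      then show ?thesis by blast
    next
      case False
      then have "f m = Suc s"
        using \<open>\<not> f m \<le> s\<close> Suc.prems(1)[of m] Suc.prems(3) by linarith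
      then show ?thesis by (metis le_SucI order_refl)
    qed
  qed
qed auto

lemma hook_less_hd_plus_length:
  assumes "is_partition lam" "in_diagram lam i j"
  shows "hook lam i j < hd lam + length lam"
proof -
  have i: "i < length lam" and j: "j < lam ! i" using assms(2) by (auto simp: in_diagram_def)
  have "lam \<noteq> []" using i by auto
  then have "lam ! i \<le> hd lam"
    using i assms(1) sorted_wrt_nth_less[of "(\<ge>)" lam 0 i]
    by (cases "i = 0") (auto simp: is_partition_def hd_conv_nth)
  moreover have "card {k. i < k \<and> k < length lam \<and> j < lam ! k} \<le> card {i<..<length lam}"
    by (rule card_mono) auto
  ultimately show ?thesis using i j by (simp add: hook_def)
qed

lemma hook_le_hook_Suc_plus_two:
  assumes "sorted_wrt (>) lam"
  shows "hook lam i j \<le> hook lam i (Suc j) + 2"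
proof -
  let ?leg = "\<lambda>j. {k. i < k \<and> k < length lam \<and> j < lam ! k}"
  let ?E = "{k. k < length lam \<and> lam ! k = Suc j}"
  have "a = b" if "a \<in> ?E" "b \<in> ?E" for a b
    using sorted_wrt_nth_less[OF assms, of a b] sorted_wrt_nth_less[OF assms, of b a] that
    by (cases a b rule: linorder_cases) auto
  then have "card ?E \<le> 1" by (simp add: card_le_Suc0_iff_eq)
  have "card (?leg j) \<le> card (?leg (Suc j) \<union> ?E)"
    by (rule card_mono) auto
  also have "\<dots> \<le> card (?leg (Suc j)) + card ?E"
    by (rule card_Un_le)
  finally have "card (?leg j) \<le> card (?leg (Suc j)) + 1"
    using \<open>card ?E \<le> 1\<close> by linarith
  then show ?thesis
    unfolding hook_def by linarith
qed

lemma hook_corner: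
  assumes "is_partition lam" "lam \<noteq> []"
  shows "hook lam 0 0 = hd lam + length lam - 1"
proof -
  have "{k. 0 < k \<and> k < length lam \<and> 0 < lam ! k} = {0<..<length lam}"
    using assms(1) by (auto simp: is_partition_def)
  moreover have "0 < hd lam" using assms by (cases lam) (auto simp: is_partition_def)
  ultimately show ?thesis using assms(2) by (cases lam) (auto simp: hook_def)
qed

lemma hook_end_of_first_row:
  assumes "sorted_wrt (>) lam" "lam \<noteq> []"
  shows "hook lam 0 (hd lam - 1) = 1"
proof -
  have "\<not> hd lam - 1 < lam ! k" if "0 < k" "k < length lam" for k
    using sorted_wrt_nth_less[OF assms(1) that] assms(2) by (simp add: hd_conv_nth)
  then have "{k. 0 < k \<and> k < length lam \<and> hd lam - 1 < lam ! k} = {}"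
    by blast
  moreover have "lam ! 0 = hd lam" using assms(2) by (simp add: hd_conv_nth)
  ultimately show ?thesis by (simp add: hook_def)
qed

lemma core_pair_iff_hd_plus_length_le:
  assumes "is_partition lam" "sorted_wrt (>) lam" "1 \<le> s"
  shows "is_core_pair s lam \<longleftrightarrow> (lam \<noteq> [] \<longrightarrow> hd lam + length lam \<le> s)"
proof
  assume core: "is_core_pair s lam"
  show "lam \<noteq> [] \<longrightarrow> hd lam + length lam \<le> s"
  proof (rule impI, rule ccontr)
    assume ne: "lam \<noteq> []" and "\<not> hd lam + length lam \<le> s"
    then have "s \<le> hook lam 0 0" using hook_corner[OF assms(1) ne] by simp
    moreover have "hook lam 0 (hd lam - 1) \<le> s"
      using hook_end_of_first_row[OF assms(2) ne] assms(3) by simp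
    ultimately obtain j where "j \<le> hd lam - 1" "hook lam 0 j = s \<or> hook lam 0 j = Suc s"
      using descent_by_at_most_two_hits[of "hd lam - 1" "hook lam 0" s]
        hook_le_hook_Suc_plus_two[OF assms(2)] by blast
    moreover have "0 < hd lam" using assms(1) ne by (cases lam) (auto simp: is_partition_def)
    ultimately show False
      using core ne by (auto simp: is_core_pair_def no_hook_def in_diagram_def hd_conv_nth)
  qed
next
  assume "lam \<noteq> [] \<longrightarrow> hd lam + length lam \<le> s"
  then have "hook lam i j < s" if "in_diagram lam i j" for i j
    using that hook_less_hd_plus_length[OF assms(1) that] by (auto simp: in_diagram_def)
  then show "is_core_pair s lam"
    by (fastforce simp: is_core_pair_def no_hook_def)
qed

lemma N_eq_card_small_d_partitions:
  assumes "0 < d" "1 \<le> s"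
  shows "N d s = card (small_d_partitions d s)"
proof -
  have "{lam. is_partition lam \<and> d_distinct d lam \<and> is_core_pair s lam} = small_d_partitions d s"
    using core_pair_iff_hd_plus_length_le sorted_wrt_greater_if_d_distinct assms
    by (auto simp: small_d_partitions_def d_partition_def)
  then show ?thesis by (simp add: N_def)
qed

lemma finite_small_d_partitions: "finite (small_d_partitions d s)"
proof (rule finite_subset)
  show "small_d_partitions d s \<subseteq> {xs. set xs \<subseteq> {..s} \<and> length xs \<le> s}"
  proof
    fix lam assume "lam \<in> small_d_partitions d s"
    then have "is_partition lam" and bound: "lam \<noteq> [] \<longrightarrow> hd lam + length lam \<le> s"
      by (auto simp: small_d_partitions_def d_partition_def)
    then have "x \<le> hd lam" if "x \<in> set lam" for x
      using that by (cases lam) (auto simp: is_partition_def)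
    with bound show "lam \<in> {xs. set xs \<subseteq> {..s} \<and> length xs \<le> s}"
      by (cases "lam = []") fastforce+
  qed
qed (rule finite_lists_length_le[OF finite_atMost])

lemma small_d_partitions_le_one:
  assumes "s \<le> 1"
  shows "small_d_partitions d s = {[]}"
proof -
  have "lam = []" if "lam \<in> small_d_partitions d s" for lam
    using that assms by (cases lam) (auto simp: small_d_partitions_def d_partition_Cons)
  moreover have "[] \<in> small_d_partitions d s"
    by (simp add: small_d_partitions_def d_partition_def is_partition_def d_distinct_def)
  ultimately show ?thesis by blast
qed

definition add_first_part :: "nat \<Rightarrow> nat list \<Rightarrow> nat list" where
  "add_first_part s mu = (s - 1 - length mu) # mu"

lemma add_first_part_mem_iff:
  assumes "2 \<le> s"
  shows "lam \<in> add_first_part s ` small_d_partitions d (s - (d + 1)) \<longleftrightarrow>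
    lam \<in> small_d_partitions d s \<and> lam \<noteq> [] \<and> hd lam + length lam = s"
proof
  assume "lam \<in> add_first_part s ` small_d_partitions d (s - (d + 1))"
  then obtain mu where mu: "mu \<in> small_d_partitions d (s - (d + 1))"
    and lam: "lam = add_first_part s mu" by blast
  have "mu \<noteq> [] \<Longrightarrow> 0 < hd mu"
    using mu by (cases mu) (auto simp: small_d_partitions_def d_partition_Cons)
  then show "lam \<in> small_d_partitions d s \<and> lam \<noteq> [] \<and> hd lam + length lam = s"
    using mu assms
    by (cases "mu = []") (auto simp: lam add_first_part_def small_d_partitions_def d_partition_Cons)
next
  assume "lam \<in> small_d_partitions d s \<and> lam \<noteq> [] \<and> hd lam + length lam = s"
  then show "lam \<in> add_first_part s ` small_d_partitions d (s - (d + 1))"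
    by (cases lam)
      (auto simp: add_first_part_def small_d_partitions_def d_partition_Cons image_iff)
qed

lemma card_small_d_partitions_rec:
  assumes "2 \<le> s"
  shows "card (small_d_partitions d s) =
    card (small_d_partitions d (s - 1)) + card (small_d_partitions d (s - (d + 1)))"
proof -
  let ?new = "add_first_part s ` small_d_partitions d (s - (d + 1))"
  have "small_d_partitions d s = small_d_partitions d (s - 1) \<union> ?new"
    using add_first_part_mem_iff[OF assms] assms
    by (auto simp: small_d_partitions_def)
  moreover have "lam \<notin> small_d_partitions d (s - 1)" if "lam \<in> ?new" for lam
    using that add_first_part_mem_iff[OF assms, of lam] assms by (auto simp: small_d_partitions_def)
  then have "small_d_partitions d (s - 1) \<inter> ?new = {}" by blast
  moreover have "inj_on (add_first_part s) (small_d_partitions d (s - (d + 1)))"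
    by (rule inj_onI) (simp add: add_first_part_def)
  ultimately show ?thesis
    by (simp add: card_Un_disjoint finite_small_d_partitions card_image)
qed

lemma card_small_d_partitions_init:
  assumes "1 \<le> s" "s \<le> d + 1"
  shows "card (small_d_partitions d s) = s"
  using assms
proof (induction s)
  case (Suc s)
  show ?case
  proof (cases "s = 0")
    case True
    then show ?thesis by (simp add: small_d_partitions_le_one)
  next
    case False
    then show ?thesis
      using Suc card_small_d_partitions_rec[of "Suc s" d] small_d_partitions_le_one[of "Suc s - (d + 1)" d]
      by simp
  qed
qed simp

theorem mainTheorem4:
  fixes d :: nat
  assumes "1 \<le> d"
  shows "(\<forall>s. 1 \<le> s \<and> s \<le> d + 1 \<longrightarrow> N d s = s) \<and>
         (\<forall>s. d + 2 \<le> s \<longrightarrow> N d s = N d (s - 1) + N d (s - (d + 1)))"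
proof (intro conjI allI impI)
  fix s assume "1 \<le> s \<and> s \<le> d + 1"
  then show "N d s = s"
    using assms N_eq_card_small_d_partitions card_small_d_partitions_init by simp
next
  fix s assume "d + 2 \<le> s"
  then show "N d s = N d (s - 1) + N d (s - (d + 1))"
    using assms N_eq_card_small_d_partitions card_small_d_partitions_rec[of s d] by simp
qed

end
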